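(* Let $A\in\mathbb{R}^{n\times n}$, $B\in\mathbb{R}^{n\times m}$ with $(A,B)$ stabilizable, $Q\succ0$, $R\succ0$, $\gamma,\eta\ge0$, $x_k\in\mathbb{R}^n$, and let $\tilde P,V,J_k,P_1,q_1,r_1$ be as in the context. For every $\alpha>1$, the problem (P1) — minimize over $F_k\in\mathbb{R}^{m\times n}$, $\delta_k$ the objective $-\delta_k+\gamma\|F_k\|_0+\eta\|F_kx_k\|_0$ subject to $J_k(F_k,\xi;x_k)\le\alpha\big(V(x_k)-V(x(t_k+\xi))\big)$ for all $\xi\in[0,\delta_k]$ — and its relaxation (P3) — minimize over $f_k\in\mathbb{R}^{mn}$, $\delta_k$ the objective $-\delta_k+\gamma\|f_k\|_1+\eta\|(x_k^T\otimes I)f_k\|_1$ subject to $\tfrac12f_k^TP_1(\xi)f_k+q_1(\xi)^Tf_k+r_1(\xi)\le0$ for all $\xi\in[0,\delta_k]$ — are feasible.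
   Context: $\tilde F$ is a fixed gain with $A+B\tilde F$ Hurwitz and $\tilde P\succ0$ solves $(A+B\tilde F)^T\tilde P+\tilde P(A+B\tilde F)+Q+\tilde F^TR\tilde F=0$; $V(x):=x^T\tilde Px$. $x(t_k+\xi)$ is the solution of $\dot x=Ax+Bu$ from $x(t_k)=x_k$ with held input $u=F_kx_k$, and $J_k(F_k,\xi;x_k):=\int_{t_k}^{t_k+\xi}(x^TQx+u^TRu)dt$. $Z(\tau):=\int_0^\tau e^{-As}ds$, $H_0(\xi):=\int_0^\xi e^{A^T\tau}Qe^{A\tau}d\tau$, $H_1(\xi):=\int_0^\xi e^{A^T\tau}Qe^{A\tau}Z(\tau)Bd\tau$, $H_2(\xi):=\int_0^\xi(e^{A\tau}Z(\tau)B)^TQ(e^{A\tau}Z(\tau)B)d\tau+\xi R$; $P_1(\xi):=2(x_kx_k^T)\otimes(H_2(\xi)+\alpha B^TZ(\xi)^Te^{A^T\xi}\tilde Pe^{A\xi}Z(\xi)B)$, $q_1(\xi):=2\mathrm{vec}((H_1(\xi)^T+\alpha B^TZ(\xi)^Te^{A^T\xi}\tilde Pe^{A\xi})x_kx_k^T)$, $r_1(\xi):=x_k^T(H_0(\xi)+\alpha(e^{A^T\xi}\tilde Pe^{A\xi}-\tilde P))x_k$; $f_k=\mathrm{vec}(F_k)$. $\|\cdot\|_0$ counts nonzero entries and $\|\cdot\|_1$ sums absolute values of entries. *)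

theory Defs
  imports "HOL-Analysis.Analysis"
begin

text \<open>Matrices are Cartesian: a p-by-q real matrix has type real^'q^'p.\<close>

primrec mpow :: "real^'n^'n \<Rightarrow> nat \<Rightarrow> real^'n^'n" where
  "mpow M 0 = mat 1"
| "mpow M (Suc k) = M ** mpow M k"

definition mexp :: "real^'n^'n \<Rightarrow> real^'n^'n" where
  "mexp M = (\<Sum>k. (1 / fact k) *\<^sub>R mpow M k)"

definition cmat :: "real^'n^'n \<Rightarrow> complex^'n^'n" where
  "cmat M = (\<chi> i j. complex_of_real (M $ i $ j))"

definition hurwitz :: "real^'n^'n \<Rightarrow> bool" where
  "hurwitz M \<longleftrightarrow> (\<forall>(ev::complex) (v::complex^'n). v \<noteq> 0 \<and> cmat M *v v = ev *s v \<longrightarrow> Re ev < 0)"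

definition stabilizable :: "real^'n^'n \<Rightarrow> real^'m^'n \<Rightarrow> bool" where
  "stabilizable A B \<longleftrightarrow> (\<exists>F::real^'n^'m. hurwitz (A + B ** F))"

definition pos_def :: "real^'n^'n \<Rightarrow> bool" where
  "pos_def M \<longleftrightarrow> transpose M = M \<and> (\<forall>x. x \<noteq> 0 \<longrightarrow> x \<bullet> (M *v x) > 0)"

text \<open>Solution of dx/dt = A x + B u with constant input u and x(0) = x0
  (time measured relative to t_k).\<close>
definition traj :: "real^'n^'n \<Rightarrow> real^'m^'n \<Rightarrow> real^'n \<Rightarrow> real^'m \<Rightarrow> real \<Rightarrow> real^'n" where
  "traj A B x0 u = (THE x. x 0 = x0 \<and> (\<forall>t. (x has_vector_derivative (A *v x t + B *v u)) (at t)))"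

definition Vfun :: "real^'n^'n \<Rightarrow> real^'n \<Rightarrow> real" where
  "Vfun Pt x = x \<bullet> (Pt *v x)"

definition Jcost :: "real^'n^'n \<Rightarrow> real^'m^'n \<Rightarrow> real^'n^'n \<Rightarrow> real^'m^'m \<Rightarrow> real^'n^'m \<Rightarrow> real \<Rightarrow> real^'n \<Rightarrow> real" where
  "Jcost A B Q R F \<xi> xk = integral {0..\<xi>}
     (\<lambda>t. traj A B xk (F *v xk) t \<bullet> (Q *v traj A B xk (F *v xk) t) + (F *v xk) \<bullet> (R *v (F *v xk)))"

definition feasible_P1 :: "real^'n^'n \<Rightarrow> real^'m^'n \<Rightarrow> real^'n^'n \<Rightarrow> real^'m^'m \<Rightarrow> real^'n^'n \<Rightarrow> real \<Rightarrow> real^'n \<Rightarrow> real^'n^'m \<Rightarrow> real \<Rightarrow> bool" where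
  "feasible_P1 A B Q R Pt \<alpha> xk F \<delta> \<longleftrightarrow>
     (\<forall>\<xi>\<in>{0..\<delta>}. Jcost A B Q R F \<xi> xk \<le> \<alpha> * (Vfun Pt xk - Vfun Pt (traj A B xk (F *v xk) \<xi>)))"

definition Zm :: "real^'n^'n \<Rightarrow> real \<Rightarrow> real^'n^'n" where
  "Zm A \<tau> = integral {0..\<tau>} (\<lambda>s. mexp ((- s) *\<^sub>R A))"

definition H0 :: "real^'n^'n \<Rightarrow> real^'n^'n \<Rightarrow> real \<Rightarrow> real^'n^'n" where
  "H0 A Q \<xi> = integral {0..\<xi>} (\<lambda>\<tau>. mexp (\<tau> *\<^sub>R transpose A) ** Q ** mexp (\<tau> *\<^sub>R A))"

definition H1 :: "real^'n^'n \<Rightarrow> real^'m^'n \<Rightarrow> real^'n^'n \<Rightarrow> real \<Rightarrow> real^'m^'n" where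
  "H1 A B Q \<xi> = integral {0..\<xi>} (\<lambda>\<tau>. mexp (\<tau> *\<^sub>R transpose A) ** Q ** mexp (\<tau> *\<^sub>R A) ** Zm A \<tau> ** B)"

definition H2 :: "real^'n^'n \<Rightarrow> real^'m^'n \<Rightarrow> real^'n^'n \<Rightarrow> real^'m^'m \<Rightarrow> real \<Rightarrow> real^'m^'m" where
  "H2 A B Q R \<xi> = integral {0..\<xi>}
     (\<lambda>\<tau>. transpose (mexp (\<tau> *\<^sub>R A) ** Zm A \<tau> ** B) ** Q ** (mexp (\<tau> *\<^sub>R A) ** Zm A \<tau> ** B))
     + \<xi> *\<^sub>R R"

text \<open>vec: column stacking; index (j,i) = column j, row i.\<close>
definition vecm :: "real^'n^'m \<Rightarrow> real^('n \<times> 'm)" where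
  "vecm F = (\<chi> p. F $ snd p $ fst p)"

text \<open>Kronecker product; row index (i1,i2), column index (j1,j2).\<close>
definition kron :: "real^'a^'b \<Rightarrow> real^'c^'d \<Rightarrow> real^('a \<times> 'c)^('b \<times> 'd)" where
  "kron M N = (\<chi> p q. M $ fst p $ fst q * N $ snd p $ snd q)"

definition outer :: "real^'n \<Rightarrow> real^'n^'n" where
  "outer x = (\<chi> i j. x $ i * x $ j)"

definition rowv :: "real^'n \<Rightarrow> real^'n^1" where
  "rowv x = (\<chi> i j. x $ j)"

definition P1m :: "real^'n^'n \<Rightarrow> real^'m^'n \<Rightarrow> real^'n^'n \<Rightarrow> real^'m^'m \<Rightarrow> real^'n^'n \<Rightarrow> real \<Rightarrow> real^'n \<Rightarrow> real \<Rightarrow> real^('n \<times> 'm)^('n \<times> 'm)" where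
  "P1m A B Q R Pt \<alpha> xk \<xi> = 2 *\<^sub>R kron (outer xk)
     (H2 A B Q R \<xi> + \<alpha> *\<^sub>R (transpose B ** transpose (Zm A \<xi>) ** mexp (\<xi> *\<^sub>R transpose A) ** Pt ** mexp (\<xi> *\<^sub>R A) ** Zm A \<xi> ** B))"

definition q1v :: "real^'n^'n \<Rightarrow> real^'m^'n \<Rightarrow> real^'n^'n \<Rightarrow> real^'n^'n \<Rightarrow> real \<Rightarrow> real^'n \<Rightarrow> real \<Rightarrow> real^('n \<times> 'm)" where
  "q1v A B Q Pt \<alpha> xk \<xi> = 2 *\<^sub>R vecm ((transpose (H1 A B Q \<xi>)
     + \<alpha> *\<^sub>R (transpose B ** transpose (Zm A \<xi>) ** mexp (\<xi> *\<^sub>R transpose A) ** Pt ** mexp (\<xi> *\<^sub>R A))) ** outer xk)"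

definition r1v :: "real^'n^'n \<Rightarrow> real^'n^'n \<Rightarrow> real^'n^'n \<Rightarrow> real \<Rightarrow> real^'n \<Rightarrow> real \<Rightarrow> real" where
  "r1v A Q Pt \<alpha> xk \<xi> = xk \<bullet> ((H0 A Q \<xi> + \<alpha> *\<^sub>R (mexp (\<xi> *\<^sub>R transpose A) ** Pt ** mexp (\<xi> *\<^sub>R A) - Pt)) *v xk)"

definition feasible_P3 :: "real^'n^'n \<Rightarrow> real^'m^'n \<Rightarrow> real^'n^'n \<Rightarrow> real^'m^'m \<Rightarrow> real^'n^'n \<Rightarrow> real \<Rightarrow> real^'n \<Rightarrow> real^('n \<times> 'm) \<Rightarrow> real \<Rightarrow> bool" where
  "feasible_P3 A B Q R Pt \<alpha> xk f \<delta> \<longleftrightarrow>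
     (\<forall>\<xi>\<in>{0..\<delta>}. (1/2) * (f \<bullet> (P1m A B Q R Pt \<alpha> xk \<xi> *v f)) + q1v A B Q Pt \<alpha> xk \<xi> \<bullet> f + r1v A Q Pt \<alpha> xk \<xi> \<le> 0)"

text \<open>Objectives (do not affect feasibility).\<close>
definition l0m :: "real^'n^'m \<Rightarrow> nat" where
  "l0m F = card {(i, j). F $ i $ j \<noteq> 0}"
definition l0v :: "real^'n \<Rightarrow> nat" where
  "l0v x = card {i. x $ i \<noteq> 0}"
definition l1v :: "real^'n \<Rightarrow> real" where
  "l1v x = (\<Sum>i\<in>UNIV. \<bar>x $ i\<bar>)"

definition obj_P1 :: "real \<Rightarrow> real \<Rightarrow> real^'n \<Rightarrow> real^'n^'m \<Rightarrow> real \<Rightarrow> real" where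
  "obj_P1 \<gamma> \<eta> xk F \<delta> = - \<delta> + \<gamma> * real (l0m F) + \<eta> * real (l0v (F *v xk))"

definition obj_P3 :: "real \<Rightarrow> real \<Rightarrow> real^'n \<Rightarrow> real^('n::finite \<times> 'm::finite) \<Rightarrow> real \<Rightarrow> real" where
  "obj_P3 \<gamma> \<eta> xk f \<delta> = - \<delta> + \<gamma> * l1v f + \<eta> * l1v (kron (rowv xk) (mat 1 :: real^'m^'m) *v f)"

end

theory Submission
  imports Defs
begin

text \<open>Both problems are feasible at the stabilizing gain itself, \<open>F\<^sub>k = Ft\<close> and \<open>f\<^sub>k = vec Ft\<close>.
  Along the trajectory under the held input \<open>u = Ft x\<^sub>k\<close>, the slack
  \<open>\<alpha> (V x\<^sub>k - V x(\<xi>)) - J\<^sub>k(\<xi>)\<close> of (P1) vanishes at \<open>\<xi> = 0\<close>, and by the Lyapunov equation its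
  derivative there is \<open>(\<alpha> - 1) (x\<^sub>k\<^sup>T Q x\<^sub>k + u\<^sup>T R u) > 0\<close>; so it stays nonnegative on some
  \<open>[0, \<delta>]\<close>. The constraint function of (P3) at \<open>vec Ft\<close> also vanishes at \<open>\<xi> = 0\<close>, since every
  term of \<open>P\<^sub>1, q\<^sub>1, r\<^sub>1\<close> contains \<open>Z(\<xi>)\<close> or an integral over \<open>[0, \<xi>]\<close>, and it has the opposite
  derivative there. For \<open>x\<^sub>k = 0\<close> everything vanishes.\<close>

section \<open>Calculus of matrix-valued functions\<close>

lemma bounded_bilinear_matrix_matrix_mult:
  "bounded_bilinear ((**) :: real^'n^'m \<Rightarrow> real^'p^'n \<Rightarrow> real^'p^'m)"
proof -
  have "bilinear ((**) :: real^'n^'m \<Rightarrow> real^'p^'n \<Rightarrow> real^'p^'m)"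
    unfolding bilinear_def
    by (auto intro!: linearI simp: vec_eq_iff matrix_matrix_mult_def sum.distrib
        sum_distrib_left algebra_simps)
  then show ?thesis
    by (rule bilinear_conv_bounded_bilinear[THEN iffD1])
qed

lemma bounded_linear_transpose: "bounded_linear (transpose :: real^'n^'m \<Rightarrow> real^'m^'n)"
  by (auto intro!: linearI simp: vec_eq_iff transpose_def simp flip: linear_conv_bounded_linear)

lemma bounded_linear_matrix_vector_mult_left: "bounded_linear (\<lambda>X::real^'n^'m. X *v v)"
  by (auto intro!: linearI simp: vec_eq_iff matrix_vector_mult_def sum.distrib sum_distrib_left
      algebra_simps simp flip: linear_conv_bounded_linear)

lemma inner_vector_matrix_mult: "x \<bullet> (v v* M) = (M *v x) \<bullet> v"
  for M :: "real^'n^'m"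
  by (metis dot_lmul_matrix inner_commute)

lemma inner_symmetric_matrix: "transpose P = P \<Longrightarrow> x \<bullet> (P *v y) = y \<bullet> (P *v x)"
  for P :: "real^'n^'n"
  by (metis inner_commute inner_vector_matrix_mult transpose_matrix_vector)

lemma has_vector_derivative_matrix_mult:
  fixes f :: "real \<Rightarrow> real^'n^'m" and g :: "real \<Rightarrow> real^'p^'n"
  assumes "(f has_vector_derivative f') (at x within S)" and "(g has_vector_derivative g') (at x within S)"
  shows "((\<lambda>x. f x ** g x) has_vector_derivative (f x ** g' + f' ** g x)) (at x within S)"
  using bounded_bilinear.has_vector_derivative[OF bounded_bilinear_matrix_matrix_mult assms] .

lemma has_vector_derivative_transpose:
  fixes f :: "real \<Rightarrow> real^'n^'m"
  assumes "(f has_vector_derivative f') F"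
  shows "((\<lambda>x. transpose (f x)) has_vector_derivative transpose f') F"
  using bounded_linear.has_vector_derivative[OF bounded_linear_transpose assms] .

lemma has_vector_derivative_const_scaleR:
  assumes "(f has_vector_derivative f') F"
  shows "((\<lambda>x. c *\<^sub>R f x) has_vector_derivative c *\<^sub>R f') F"
  using bounded_linear.has_vector_derivative[OF bounded_linear_scaleR_right assms] .

lemma continuous_on_matrix_mult:
  fixes f :: "real \<Rightarrow> real^'n^'m" and g :: "real \<Rightarrow> real^'p^'n"
  shows "continuous_on S f \<Longrightarrow> continuous_on S g \<Longrightarrow> continuous_on S (\<lambda>x. f x ** g x)"
  by (rule bounded_bilinear.continuous_on[OF bounded_bilinear_matrix_matrix_mult])

lemma continuous_on_transpose:
  fixes f :: "real \<Rightarrow> real^'n^'m"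
  shows "continuous_on S f \<Longrightarrow> continuous_on S (\<lambda>x. transpose (f x))"
  by (rule bounded_linear.continuous_on[OF bounded_linear_transpose])

lemma has_real_derivative_inner_matrix_vector_mult:
  fixes N :: "real \<Rightarrow> real^'n^'m"
  assumes "(N has_vector_derivative N') F"
  shows "((\<lambda>x. u \<bullet> (N x *v v)) has_real_derivative u \<bullet> (N' *v v)) F"
  using bounded_linear.has_vector_derivative[OF
      bounded_linear_compose[OF bounded_linear_inner_right bounded_linear_matrix_vector_mult_left] assms]
  by (simp add: has_real_derivative_iff_has_vector_derivative)

section \<open>Exponential series and the matrix exponential\<close>

lemma summable_exp_series:
  fixes a :: "nat \<Rightarrow> 'a::banach"
  assumes bound: "\<And>k. norm (a k) \<le> c * C ^ k"
  shows "summable (\<lambda>k. (t ^ k / fact k) *\<^sub>R a k)"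
proof (rule summable_comparison_test')
  show "summable (\<lambda>k. c * (inverse (fact k) * (\<bar>t\<bar> * C) ^ k))"
    by (intro summable_mult summable_exp)
  show "norm ((t ^ k / fact k) *\<^sub>R a k) \<le> c * (inverse (fact k) * (\<bar>t\<bar> * C) ^ k)" for k
  proof -
    have "norm ((t ^ k / fact k) *\<^sub>R a k) \<le> (\<bar>t\<bar> ^ k / fact k) * (c * C ^ k)"
      using bound by (simp add: power_abs divide_right_mono mult_left_mono)
    then show ?thesis by (simp add: power_mult_distrib field_simps)
  qed
qed

lemma summable_exp_series_termdiff: "summable (\<lambda>k. real k * r ^ (k - 1) / fact k * C ^ k)"
proof -
  have "real (Suc k) * r ^ (Suc k - 1) / fact (Suc k) * C ^ Suc k = C * (inverse (fact k) * (r * C) ^ k)"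
    for k
    by (simp add: fact_Suc power_mult_distrib divide_inverse del: of_nat_Suc)
  then have "summable (\<lambda>k. real (Suc k) * r ^ (Suc k - 1) / fact (Suc k) * C ^ Suc k)"
    by (simp only:) (intro summable_mult summable_exp)
  then show ?thesis
    by (rule summable_Suc_iff[THEN iffD1])
qed

lemma exp_series_termdiff_sums:
  fixes a :: "nat \<Rightarrow> 'a::banach"
  assumes bound: "\<And>k. norm (a k) \<le> c * C ^ k"
  shows "(\<lambda>k. (real k * t ^ (k - 1) / fact k) *\<^sub>R a k) sums (\<Sum>k. (t ^ k / fact k) *\<^sub>R a (Suc k))"
proof -
  have "summable (\<lambda>k. (t ^ k / fact k) *\<^sub>R a (Suc k))"
    by (rule summable_exp_series[of _ "c * C" C]) (use bound[of "Suc _"] in \<open>simp add: mult.assoc\<close>)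
  moreover have "(real (Suc k) * t ^ (Suc k - 1) / fact (Suc k)) *\<^sub>R a (Suc k)
      = (t ^ k / fact k) *\<^sub>R a (Suc k)" for k
    by (simp add: fact_Suc del: of_nat_Suc)
  ultimately have "(\<lambda>k. (real (Suc k) * t ^ (Suc k - 1) / fact (Suc k)) *\<^sub>R a (Suc k)) sums
      (\<Sum>k. (t ^ k / fact k) *\<^sub>R a (Suc k))"
    by (simp only: summable_sums)
  from sums_Suc_iff[of "\<lambda>k. (real k * t ^ (k - 1) / fact k) *\<^sub>R a k", THEN iffD1, OF this]
  show ?thesis by simp
qed

lemma uniform_limit_imp_eventually_scaleR_partial_sums_le:
  fixes d :: "nat \<Rightarrow> 'b \<Rightarrow> 'a::real_normed_vector"
  assumes "uniform_limit S (\<lambda>n x. \<Sum>i<n. d i x) g sequentially" and "e > 0"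
  shows "\<forall>\<^sub>F n in sequentially. \<forall>x\<in>S. \<forall>h::real. norm ((\<Sum>i<n. h *\<^sub>R d i x) - h *\<^sub>R g x) \<le> e * norm h"
  using assms(1)[unfolded uniform_limit_iff, rule_format, OF assms(2)]
proof eventually_elim
  case (elim n)
  show ?case
  proof (intro ballI allI)
    fix x h assume "x \<in> S"
    with elim have "norm ((\<Sum>i<n. d i x) - g x) \<le> e"
      by (simp add: dist_norm less_imp_le)
    then have "\<bar>h\<bar> * norm ((\<Sum>i<n. d i x) - g x) \<le> \<bar>h\<bar> * e"
      by (rule mult_left_mono) simp
    moreover have "(\<Sum>i<n. h *\<^sub>R d i x) - h *\<^sub>R g x = h *\<^sub>R ((\<Sum>i<n. d i x) - g x)"
      by (simp only: scaleR_sum_right scaleR_diff_right)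
    ultimately show "norm ((\<Sum>i<n. h *\<^sub>R d i x) - h *\<^sub>R g x) \<le> e * norm h"
      by (simp only: norm_scaleR real_norm_def mult.commute)
  qed
qed

lemma has_vector_derivative_exp_series:
  fixes a :: "nat \<Rightarrow> 'a::banach"
  assumes bound: "\<And>k. norm (a k) \<le> c * C ^ k"
  shows "((\<lambda>t. \<Sum>k. (t ^ k / fact k) *\<^sub>R a k) has_vector_derivative
           (\<Sum>k. (t ^ k / fact k) *\<^sub>R a (Suc k))) (at t)"
proof -
  define d where "d k x = (real k * x ^ (k - 1) / fact k) *\<^sub>R a k" for k and x :: real
  define r where "r = \<bar>t\<bar> + 1"
  have t: "t \<in> ball 0 r" by (simp add: r_def)
  have "c \<ge> 0" using order_trans[OF norm_ge_zero bound[of 0]] by simp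
  have "norm (d k x) \<le> c * (real k * r ^ (k - 1) / fact k * C ^ k)" if "x \<in> ball 0 r" for k x
  proof -
    have "norm (d k x) = (real k * \<bar>x\<bar> ^ (k - 1) / fact k) * norm (a k)"
      by (simp add: d_def power_abs abs_mult)
    also have "\<dots> \<le> (real k * r ^ (k - 1) / fact k) * (c * C ^ k)"
      using that bound by (intro mult_mono divide_right_mono mult_left_mono power_mono) auto
    finally show ?thesis by (simp add: mult_ac)
  qed
  then have unif: "uniform_limit (ball 0 r) (\<lambda>n x. \<Sum>i<n. d i x) (\<lambda>x. \<Sum>i. d i x) sequentially"
    by (rule Weierstrass_m_test[OF _ summable_mult[OF summable_exp_series_termdiff]])
  have "\<exists>g. \<forall>x\<in>ball 0 r. (\<lambda>k. (x ^ k / fact k) *\<^sub>R a k) sums g x \<and>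
      (g has_derivative (\<lambda>h. h *\<^sub>R (\<Sum>i. d i x))) (at x within ball 0 r)"
  proof (rule has_derivative_series[where f' = "\<lambda>k x h. h *\<^sub>R d k x"])
    show "((\<lambda>x. (x ^ k / fact k) *\<^sub>R a k) has_derivative (\<lambda>h. h *\<^sub>R d k x)) (at x within ball 0 r)"
      for k x
      unfolding d_def by (auto intro!: derivative_eq_intros)
    show "(\<lambda>k. (t ^ k / fact k) *\<^sub>R a k) sums (\<Sum>k. (t ^ k / fact k) *\<^sub>R a k)"
      using summable_exp_series[OF bound] by (rule summable_sums)
  qed (use t uniform_limit_imp_eventually_scaleR_partial_sums_le[OF unif] in auto)
  then obtain g where g: "\<And>x. x \<in> ball 0 r \<Longrightarrow> (\<lambda>k. (x ^ k / fact k) *\<^sub>R a k) sums g x"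
    "(g has_derivative (\<lambda>h. h *\<^sub>R (\<Sum>i. d i t))) (at t within ball 0 r)"
    using t by blast
  have "((\<lambda>x. \<Sum>k. (x ^ k / fact k) *\<^sub>R a k) has_derivative (\<lambda>h. h *\<^sub>R (\<Sum>i. d i t))) (at t)"
    using g(2)[unfolded at_within_open[OF t open_ball]] open_ball t
    by (rule has_derivative_transform_within_open) (use g(1) sums_unique in blast)
  moreover have "(\<Sum>i. d i t) = (\<Sum>k. (t ^ k / fact k) *\<^sub>R a (Suc k))"
    using exp_series_termdiff_sums[OF bound] by (simp add: d_def sums_iff)
  ultimately show ?thesis by (simp add: has_vector_derivative_def)
qed

lemma mpow_scaleR: "mpow (t *\<^sub>R M) k = t ^ k *\<^sub>R mpow M k"
  by (induction k) (simp_all add: matrix_scalar_ac scalar_matrix_assoc[symmetric])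

lemma norm_mpow_le:
  obtains c C where "1 \<le> C" "\<And>k. norm (mpow (M::real^'n^'n) k) \<le> c * C ^ k"
proof -
  obtain K where K: "K > 0" "\<And>X Y. norm ((X::real^'n^'n) ** (Y::real^'n^'n)) \<le> norm X * norm Y * K"
    using bounded_bilinear.pos_bounded[OF bounded_bilinear_matrix_matrix_mult] by blast
  have "norm (mpow M k) \<le> norm (mat 1 :: real^'n^'n) * (norm M * K + 1) ^ k" for k
  proof (induction k)
    case (Suc k)
    have "norm (mpow M (Suc k)) \<le> (norm M * K) * norm (mpow M k)"
      using K(2)[of M "mpow M k"] by (simp add: mult_ac)
    also have "\<dots> \<le> (norm M * K + 1) * (norm (mat 1 :: real^'n^'n) * (norm M * K + 1) ^ k)"
      using Suc K(1) by (intro mult_mono) auto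
    finally show ?case by (simp add: mult_ac)
  qed simp
  with K(1) show thesis by (intro that[of "norm M * K + 1"]) auto
qed

lemma mexp_eq_exp_series: "mexp (t *\<^sub>R M) = (\<Sum>k. (t ^ k / fact k) *\<^sub>R mpow M k)"
  by (simp add: mexp_def mpow_scaleR)

lemma mexp_has_vector_derivative:
  "((\<lambda>t. mexp (t *\<^sub>R M)) has_vector_derivative M ** mexp (t *\<^sub>R M)) (at t within S)"
proof -
  obtain c C where bound: "\<And>k. norm (mpow M k) \<le> c * C ^ k"
    using norm_mpow_le by blast
  have "M ** mexp (t *\<^sub>R M) = (\<Sum>k. (t ^ k / fact k) *\<^sub>R mpow M (Suc k))"
    using bounded_linear.suminf[OF bounded_bilinear.bounded_linear_right[OF bounded_bilinear_matrix_matrix_mult]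
        summable_exp_series[OF bound], of M t]
    by (simp add: mexp_eq_exp_series matrix_scalar_ac scalar_matrix_assoc[symmetric])
  then show ?thesis
    using has_vector_derivative_exp_series[OF bound, of t]
    by (simp add: mexp_eq_exp_series has_vector_derivative_at_within)
qed

lemma continuous_on_mexp: "continuous_on S (\<lambda>t. mexp (t *\<^sub>R M))"
  using mexp_has_vector_derivative has_vector_derivative_continuous
  by (blast intro: continuous_at_imp_continuous_on)

lemma mexp_zero [simp]: "mexp 0 = mat 1"
proof -
  have "(1 / fact k) *\<^sub>R mpow 0 k = (0::real^'n^'n)" if "k \<notin> {0}" for k
    using that by (cases k) simp_all
  then show ?thesis
    unfolding mexp_def by (subst suminf_finite[of "{0}"]) auto
qed

section \<open>The trajectory under a held input\<close>

lemma homogeneous_linear_ode_zero_nonneg: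
  fixes d :: "real \<Rightarrow> real^'n" and M :: "real^'n^'n"
  assumes deriv: "\<And>s. (d has_vector_derivative M *v d s) (at s)" and "d 0 = 0" and "0 \<le> t"
  shows "d t = 0"
proof -
  obtain K where K: "\<And>v. norm (M *v v) \<le> norm v * K"
    using bounded_linear.bounded[OF matrix_vector_mul_bounded_linear] by blast
  define h where "h s = exp (- (2 * K) * s) * (d s \<bullet> d s)" for s
  text \<open>The weight \<open>exp (-2Ks)\<close> absorbs the growth of \<open>|d|\<^sup>2\<close> allowed by the bound
    \<open>d \<bullet> M d \<le> K |d|\<^sup>2\<close>, so \<open>h\<close> is nonincreasing.\<close>
  have "h t \<le> h 0"
  proof (rule DERIV_nonpos_imp_nonincreasing[OF \<open>0 \<le> t\<close>])
    fix s :: real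
    have "((\<lambda>s. d s \<bullet> d s) has_real_derivative 2 * (d s \<bullet> (M *v d s))) (at s)"
      using bounded_bilinear.has_vector_derivative[OF bounded_bilinear_inner deriv deriv]
      by (simp add: has_real_derivative_iff_has_vector_derivative inner_commute)
    then have "(h has_real_derivative
        exp (- (2 * K) * s) * (2 * (d s \<bullet> (M *v d s)) - 2 * K * (d s \<bullet> d s))) (at s)"
      unfolding h_def by (auto intro!: derivative_eq_intros simp: algebra_simps)
    moreover have "d s \<bullet> (M *v d s) \<le> K * (d s \<bullet> d s)"
    proof -
      have "d s \<bullet> (M *v d s) \<le> norm (d s) * norm (M *v d s)"
        by (rule norm_cauchy_schwarz)
      also have "\<dots> \<le> norm (d s) * (norm (d s) * K)"
        using K by (rule mult_left_mono) simp
      finally show ?thesis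
        by (simp add: power2_norm_eq_inner[symmetric] power2_eq_square mult_ac)
    qed
    ultimately show "\<exists>y. (h has_real_derivative y) (at s) \<and> y \<le> 0"
      by (intro exI conjI) (auto intro: mult_nonneg_nonpos)
  qed
  then have "d t \<bullet> d t \<le> 0"
    by (simp add: h_def \<open>d 0 = 0\<close> mult_le_0_iff)
  then show ?thesis by (meson inner_gt_zero_iff not_le)
qed

lemma homogeneous_linear_ode_zero:
  fixes d :: "real \<Rightarrow> real^'n" and M :: "real^'n^'n"
  assumes deriv: "\<And>s. (d has_vector_derivative M *v d s) (at s)" and "d 0 = 0"
  shows "d t = 0"
proof (cases "0 \<le> t")
  case True
  then show ?thesis using homogeneous_linear_ode_zero_nonneg assms by blast
next
  case False
  have neg: "(- M) *v v = - (M *v v)" for v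
    by (simp add: vec_eq_iff matrix_vector_mult_def sum_negf)
  have "((d \<circ> uminus) has_vector_derivative (- M) *v (d \<circ> uminus) s) (at s)" for s
    using vector_diff_chain_at[OF has_vector_derivative_minus[OF has_vector_derivative_id] deriv]
    by (simp add: o_def neg)
  from homogeneous_linear_ode_zero_nonneg[of "d \<circ> uminus" "- M" "- t", OF this] False \<open>d 0 = 0\<close>
  show ?thesis by simp
qed

text \<open>The derivatives at \<open>0\<close> of the solution of \<open>x' = A x + B u\<close>, \<open>x(0) = x\<close>: differentiating
  the equation, the \<open>(j+1)\<close>-st one is \<open>A\<^sup>j x'(0)\<close>. The solution is their exponential series.\<close>

definition traj_coeff :: "real^'n^'n \<Rightarrow> real^'m^'n \<Rightarrow> real^'n \<Rightarrow> real^'m \<Rightarrow> nat \<Rightarrow> real^'n" where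
  "traj_coeff A B x u k = (case k of 0 \<Rightarrow> x | Suc j \<Rightarrow> mpow A j *v (A *v x + B *v u))"

lemma norm_traj_coeff_le:
  fixes A :: "real^'n^'n" and B :: "real^'m^'n" and x :: "real^'n" and u :: "real^'m"
  obtains c C where "\<And>k. norm (traj_coeff A B x u k) \<le> c * C ^ k"
proof -
  define z where "z = A *v x + B *v u"
  obtain c C where C: "1 \<le> C" and bound: "\<And>k. norm (mpow A k) \<le> c * C ^ k"
    using norm_mpow_le by blast
  obtain K where K: "\<And>X. norm ((X::real^'n^'n) *v z) \<le> norm X * K" "0 \<le> K"
    using bounded_linear.nonneg_bounded[OF bounded_linear_matrix_vector_mult_left] by blast
  have "c \<ge> 0" using order_trans[OF norm_ge_zero bound[of 0]] by simp
  have "norm (traj_coeff A B x u k) \<le> (norm x + c * K) * C ^ k" for k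
  proof (cases k)
    case 0
    then show ?thesis using \<open>c \<ge> 0\<close> K(2) by (simp add: traj_coeff_def)
  next
    case (Suc j)
    have "norm (mpow A j *v z) \<le> c * C ^ j * K"
      using K bound[of j] by (meson mult_right_mono order_trans)
    also have "\<dots> \<le> (norm x + c * K) * C ^ Suc j"
    proof -
      have "c * K * C ^ j \<le> c * K * C ^ Suc j"
        using C \<open>c \<ge> 0\<close> K(2) by (intro mult_left_mono power_increasing) auto
      also have "\<dots> \<le> (norm x + c * K) * C ^ Suc j"
        using C by (intro mult_right_mono) auto
      finally show ?thesis by (simp add: mult_ac)
    qed
    finally show ?thesis by (simp add: Suc traj_coeff_def z_def)
  qed
  then show thesis by (rule that)
qed

lemma traj_exp_series_solves:
  fixes A :: "real^'n^'n" and B :: "real^'m^'n" and x :: "real^'n" and u :: "real^'m"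
  defines "y \<equiv> \<lambda>t. \<Sum>k. (t ^ k / fact k) *\<^sub>R traj_coeff A B x u k"
  shows "y 0 = x" and "(y has_vector_derivative A *v y t + B *v u) (at t)"
proof -
  show "y 0 = x"
    unfolding y_def by (subst suminf_finite[of "{0}"]) (auto simp: traj_coeff_def)
  obtain c C where bound: "\<And>k. norm (traj_coeff A B x u k) \<le> c * C ^ k"
    using norm_traj_coeff_le by blast
  have "(\<lambda>k. (t ^ k / fact k) *\<^sub>R (A *v traj_coeff A B x u k)) sums (A *v y t)"
    using bounded_linear.sums[OF matrix_vector_mul_bounded_linear
        summable_sums[OF summable_exp_series[OF bound]]]
    by (simp add: y_def matrix_vector_mult_scaleR)
  from sums_add[OF this sums_single[of 0 "\<lambda>_. B *v u"]]
  have "(\<lambda>k. (t ^ k / fact k) *\<^sub>R traj_coeff A B x u (Suc k)) sums (A *v y t + B *v u)"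
  proof (rule back_subst[of "\<lambda>f. f sums _"], intro ext)
    fix k
    show "(t ^ k / fact k) *\<^sub>R (A *v traj_coeff A B x u k) + (if k = 0 then B *v u else 0)
        = (t ^ k / fact k) *\<^sub>R traj_coeff A B x u (Suc k)"
      by (cases k) (simp_all add: traj_coeff_def matrix_vector_mul_assoc)
  qed
  then show "(y has_vector_derivative A *v y t + B *v u) (at t)"
    using has_vector_derivative_exp_series[OF bound, of t] by (simp add: y_def sums_iff)
qed

lemma traj_unique:
  assumes "y 0 = x" and "\<And>t. (y has_vector_derivative A *v y t + B *v u) (at t)"
  shows "traj A B x u = y"
  unfolding traj_def
proof (rule the_equality)
  fix z assume z: "z 0 = x \<and> (\<forall>t. (z has_vector_derivative A *v z t + B *v u) (at t))"
  have "z t - y t = 0" for t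
  proof (rule homogeneous_linear_ode_zero[where M = A])
    show "((\<lambda>t. z t - y t) has_vector_derivative A *v (z s - y s)) (at s)" for s
      using has_vector_derivative_diff[OF z[THEN conjunct2, rule_format] assms(2)]
      by (simp add: matrix_vector_mult_diff_distrib)
  qed (use z assms(1) in simp)
  then show "z = y" by auto
qed (use assms in auto)

lemma traj_eq_exp_series: "traj A B x u = (\<lambda>t. \<Sum>k. (t ^ k / fact k) *\<^sub>R traj_coeff A B x u k)"
  by (rule traj_unique) (rule traj_exp_series_solves)+

lemma traj_0 [simp]: "traj A B x u 0 = x"
  unfolding traj_eq_exp_series by (rule traj_exp_series_solves(1))

lemma traj_has_vector_derivative:
  "(traj A B x u has_vector_derivative A *v traj A B x u t + B *v u) (at t)"
  unfolding traj_eq_exp_series by (rule traj_exp_series_solves(2))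

lemma continuous_on_traj: "continuous_on S (traj A B x u)"
  using traj_has_vector_derivative has_vector_derivative_continuous
  by (blast intro: continuous_at_imp_continuous_on)

lemma traj_zero: "traj A B 0 0 = (\<lambda>t. 0)"
  by (rule traj_unique) simp_all

section \<open>The data of (P3) near \<open>\<xi> = 0\<close>\<close>

lemma Zm_has_vector_derivative:
  assumes "t \<in> {0..b}"
  shows "(Zm A has_vector_derivative mexp ((- t) *\<^sub>R A)) (at t within {0..b})"
proof -
  have "continuous_on {0..b} (\<lambda>s. mexp ((- s) *\<^sub>R A))"
    using continuous_on_mexp[of _ "- A"] by simp
  then show ?thesis
    unfolding Zm_def[abs_def] by (rule integral_has_vector_derivative[OF _ assms])
qed

lemma continuous_on_Zm: "continuous_on {0..b} (Zm A)"
  using Zm_has_vector_derivative has_vector_derivative_continuous continuous_on_eq_continuous_within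
  by blast

lemma Zm_zero [simp]: "Zm A 0 = 0"
  by (simp add: Zm_def)

lemma H0_has_vector_derivative:
  assumes "t \<in> {0..b}"
  shows "(H0 A Q has_vector_derivative mexp (t *\<^sub>R transpose A) ** Q ** mexp (t *\<^sub>R A))
    (at t within {0..b})"
  unfolding H0_def[abs_def]
  by (intro integral_has_vector_derivative assms continuous_on_matrix_mult continuous_on_mexp
      continuous_on_const)

lemma H1_has_vector_derivative:
  assumes "t \<in> {0..b}"
  shows "(H1 A B Q has_vector_derivative
      mexp (t *\<^sub>R transpose A) ** Q ** mexp (t *\<^sub>R A) ** Zm A t ** B) (at t within {0..b})"
  unfolding H1_def[abs_def]
  by (intro integral_has_vector_derivative assms continuous_on_matrix_mult continuous_on_mexp
      continuous_on_Zm continuous_on_const)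

lemma H2_has_vector_derivative:
  assumes "t \<in> {0..b}"
  shows "(H2 A B Q R has_vector_derivative
      transpose (mexp (t *\<^sub>R A) ** Zm A t ** B) ** Q ** (mexp (t *\<^sub>R A) ** Zm A t ** B) + R)
      (at t within {0..b})"
  unfolding H2_def[abs_def]
  by (intro has_vector_derivative_add integral_has_vector_derivative assms continuous_on_matrix_mult
      continuous_on_transpose continuous_on_mexp continuous_on_Zm continuous_on_const
      has_vector_derivative_eq_rhs[OF has_vector_derivative_scaleR[OF DERIV_ident has_vector_derivative_const]])
    simp

lemma H0_zero [simp]: "H0 A Q 0 = 0"
  and H1_zero [simp]: "H1 A B Q 0 = 0"
  and H2_zero [simp]: "H2 A B Q R 0 = 0"
  by (simp_all add: H0_def H1_def H2_def)

lemma bounded_linear_kron_right: "bounded_linear (kron (M :: real^'a^'b) :: real^'c^'d \<Rightarrow> _)"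
  by (auto intro!: linearI simp: vec_eq_iff kron_def algebra_simps simp flip: linear_conv_bounded_linear)

lemma bounded_linear_vecm: "bounded_linear (vecm :: real^'n^'m \<Rightarrow> real^('n \<times> 'm))"
  by (auto intro!: linearI simp: vec_eq_iff vecm_def simp flip: linear_conv_bounded_linear)

lemma transpose_zero [simp]: "transpose 0 = (0::real^'n^'m)"
  by (simp add: transpose_def vec_eq_iff)

lemma kron_zero_right [simp]: "kron M 0 = 0"
  by (simp add: kron_def vec_eq_iff)

lemma vecm_zero [simp]: "vecm 0 = 0"
  by (simp add: vecm_def vec_eq_iff)

lemmas matrix_derivative_intros =
  has_vector_derivative_add has_vector_derivative_diff has_vector_derivative_const_scaleR
  has_vector_derivative_matrix_mult has_vector_derivative_transpose has_vector_derivative_const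
  mexp_has_vector_derivative

lemma P1m_zero [simp]: "P1m A B Q R Pt \<alpha> xk 0 = 0"
  by (simp add: P1m_def)

lemma q1v_zero [simp]: "q1v A B Q Pt \<alpha> xk 0 = 0"
  by (simp add: q1v_def)

lemma r1v_zero [simp]: "r1v A Q Pt \<alpha> xk 0 = 0"
  by (simp add: r1v_def)

lemma P1m_has_vector_derivative_at_0:
  "(P1m A B Q R Pt \<alpha> xk has_vector_derivative 2 *\<^sub>R kron (outer xk) R) (at 0 within {0..1})"
  unfolding P1m_def[abs_def]
  by (rule has_vector_derivative_eq_rhs,
      (rule has_vector_derivative_const_scaleR bounded_linear.has_vector_derivative[OF bounded_linear_kron_right]
        matrix_derivative_intros H2_has_vector_derivative Zm_has_vector_derivative | simp)+)

lemma q1v_has_vector_derivative_at_0: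
  "(q1v A B Q Pt \<alpha> xk has_vector_derivative 2 *\<^sub>R vecm ((\<alpha> *\<^sub>R (transpose B ** Pt)) ** outer xk))
    (at 0 within {0..1})"
  unfolding q1v_def[abs_def]
  by (rule has_vector_derivative_eq_rhs,
      (rule bounded_linear.has_vector_derivative[OF bounded_linear_vecm] matrix_derivative_intros
        H1_has_vector_derivative Zm_has_vector_derivative | simp)+)

lemma r1v_has_real_derivative_at_0:
  "(r1v A Q Pt \<alpha> xk has_real_derivative xk \<bullet> ((Q + \<alpha> *\<^sub>R (transpose A ** Pt + Pt ** A)) *v xk))
    (at 0 within {0..1})"
  unfolding r1v_def[abs_def]
  by (rule has_real_derivative_inner_matrix_vector_mult, rule has_vector_derivative_eq_rhs,
      (rule matrix_derivative_intros H0_has_vector_derivative | simp add: algebra_simps)+)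

lemma sum_UNIV_prod: "(\<Sum>p\<in>UNIV. f p) = (\<Sum>a\<in>UNIV. \<Sum>b\<in>UNIV. f (a, b))"
  by (simp add: sum.cartesian_product UNIV_Times_UNIV[symmetric] del: UNIV_Times_UNIV)

lemma matrix_mult_outer: "G ** outer x = (\<chi> i j. (G *v x) $ i * x $ j)"
  by (simp add: vec_eq_iff matrix_matrix_mult_def matrix_vector_mult_def outer_def sum_distrib_left mult_ac)

lemma inner_vecm_mult_outer: "vecm (G ** outer x) \<bullet> vecm F = (F *v x) \<bullet> (G *v x)"
  for F G :: "real^'n^'m"
  unfolding matrix_mult_outer inner_vec_def vecm_def sum_UNIV_prod
  by (subst sum.swap) (simp add: matrix_vector_mult_def[of F] sum_distrib_left mult_ac)

lemma kron_outer_mult_vecm: "kron (outer x) H *v vecm F = vecm (H ** F ** outer x)"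
  for F :: "real^'n^'m" and H :: "real^'m^'m"
  unfolding matrix_vector_mult_def matrix_matrix_mult_def kron_def outer_def vecm_def
  by (simp add: vec_eq_iff sum_UNIV_prod sum_distrib_left sum_distrib_right mult_ac)

lemma inner_vecm_kron_outer: "vecm F \<bullet> (kron (outer x) H *v vecm F) = (F *v x) \<bullet> (H *v (F *v x))"
  for F :: "real^'n^'m" and H :: "real^'m^'m"
  by (simp add: kron_outer_mult_vecm inner_commute[of "vecm F"] inner_vecm_mult_outer
      matrix_vector_mul_assoc)

lemma nonneg_near_0_if_pos_derivative:
  fixes \<phi> :: "real \<Rightarrow> real"
  assumes "(\<phi> has_real_derivative D) (at 0 within {0..1})" and "0 < D" and "\<phi> 0 = 0"
  shows "\<exists>\<delta>>0. \<forall>\<xi>\<in>{0..\<delta>}. 0 \<le> \<phi> \<xi>"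
proof -
  obtain d where "d > 0" and d: "\<And>h. 0 < h \<Longrightarrow> h \<in> {0..1} \<Longrightarrow> h < d \<Longrightarrow> \<phi> 0 < \<phi> h"
    using has_real_derivative_pos_inc_right[OF assms(1,2)] by auto
  show ?thesis
  proof (intro exI[of _ "min 1 (d / 2)"] conjI ballI)
    fix \<xi> assume "\<xi> \<in> {0..min 1 (d / 2)}"
    with \<open>d > 0\<close> d[of \<xi>] \<open>\<phi> 0 = 0\<close> show "0 \<le> \<phi> \<xi>"
      by (cases "\<xi> = 0") auto
  qed (use \<open>d > 0\<close> in auto)
qed

lemma stage_cost_pos:
  fixes Q :: "real^'n^'n" and R :: "real^'m^'m"
  assumes "pos_def Q" and "pos_def R" and "x \<noteq> 0"
  shows "0 < x \<bullet> (Q *v x) + u \<bullet> (R *v u)"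
proof -
  have "0 \<le> u \<bullet> (R *v u)"
    using \<open>pos_def R\<close> by (cases "u = 0") (auto simp: pos_def_def less_imp_le)
  with assms show ?thesis by (simp add: pos_def_def add_pos_nonneg)
qed

lemma lyapunov_along_feedback:
  fixes A P Q :: "real^'n^'n" and B :: "real^'m^'n" and F :: "real^'n^'m" and R :: "real^'m^'m"
  assumes "transpose (A + B ** F) ** P + P ** (A + B ** F) + Q + transpose F ** R ** F = 0"
  shows "(A *v x + B *v (F *v x)) \<bullet> (P *v x) + x \<bullet> (P *v (A *v x + B *v (F *v x)))
    = - (x \<bullet> (Q *v x) + (F *v x) \<bullet> (R *v (F *v x)))"
proof -
  have "x \<bullet> ((transpose (A + B ** F) ** P + P ** (A + B ** F) + Q + transpose F ** R ** F) *v x) = 0"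
    using assms by simp
  then show ?thesis
    by (simp add: matrix_vector_mult_add_rdistrib matrix_vector_mul_assoc[symmetric] inner_add_right
        inner_vector_matrix_mult)
qed

lemma P1_slack_has_real_derivative_at_0:
  fixes A Pt Q :: "real^'n^'n" and B :: "real^'m^'n" and F :: "real^'n^'m" and R :: "real^'m^'m"
    and xk :: "real^'n"
  defines "u \<equiv> F *v xk" and "y \<equiv> A *v xk + B *v (F *v xk)"
  shows "((\<lambda>\<xi>. \<alpha> * (Vfun Pt xk - Vfun Pt (traj A B xk u \<xi>)) - Jcost A B Q R F \<xi> xk)
    has_real_derivative - \<alpha> * (y \<bullet> (Pt *v xk) + xk \<bullet> (Pt *v y)) - (xk \<bullet> (Q *v xk) + u \<bullet> (R *v u)))
    (at 0 within {0..1})"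
proof -
  define x where "x = traj A B xk u"
  have x': "(x has_vector_derivative y) (at 0 within {0..1})"
    using traj_has_vector_derivative[of A B xk u 0]
    by (simp add: x_def y_def u_def has_vector_derivative_at_within)
  have "((\<lambda>\<xi>. Vfun Pt (x \<xi>)) has_real_derivative y \<bullet> (Pt *v xk) + xk \<bullet> (Pt *v y))
      (at 0 within {0..1})"
    using bounded_bilinear.has_vector_derivative[OF bounded_bilinear_inner x'
        bounded_linear.has_vector_derivative[OF matrix_vector_mul_bounded_linear[of Pt] x']]
    by (simp add: Vfun_def has_real_derivative_iff_has_vector_derivative x_def add.commute)
  moreover have "((\<lambda>\<xi>. Jcost A B Q R F \<xi> xk) has_real_derivative xk \<bullet> (Q *v xk) + u \<bullet> (R *v u))
      (at 0 within {0..1})"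
  proof -
    have "continuous_on {0..1} (\<lambda>t. x t \<bullet> (Q *v x t) + u \<bullet> (R *v u))"
      unfolding x_def
      by (intro continuous_intros continuous_on_traj
          bounded_linear.continuous_on[OF matrix_vector_mul_bounded_linear])
    from integral_has_vector_derivative[OF this, of 0]
    show ?thesis
      by (simp add: Jcost_def has_real_derivative_iff_has_vector_derivative x_def u_def)
  qed
  ultimately show ?thesis
    unfolding x_def[symmetric] by (auto intro!: derivative_eq_intros simp: algebra_simps)
qed

lemma feasible_P1_stabilizing_gain:
  fixes A Pt Q :: "real^'n^'n" and B :: "real^'m^'n" and Ft :: "real^'n^'m" and R :: "real^'m^'m"
  assumes "pos_def Q" and "pos_def R"
    and lyap: "transpose (A + B ** Ft) ** Pt + Pt ** (A + B ** Ft) + Q + transpose Ft ** R ** Ft = 0"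
    and "\<alpha> > 1"
  shows "\<exists>\<delta>>0. feasible_P1 A B Q R Pt \<alpha> xk Ft \<delta>"
proof (cases "xk = 0")
  case True
  then have "feasible_P1 A B Q R Pt \<alpha> xk Ft 1"
    by (simp add: feasible_P1_def Jcost_def Vfun_def traj_zero)
  then show ?thesis using zero_less_one by blast
next
  case False
  define c where "c = xk \<bullet> (Q *v xk) + (Ft *v xk) \<bullet> (R *v (Ft *v xk))"
  have "c > 0"
    unfolding c_def using assms(1,2) False by (rule stage_cost_pos)
  have "((\<lambda>\<xi>. \<alpha> * (Vfun Pt xk - Vfun Pt (traj A B xk (Ft *v xk) \<xi>)) - Jcost A B Q R Ft \<xi> xk)
      has_real_derivative (\<alpha> - 1) * c) (at 0 within {0..1})"
    using P1_slack_has_real_derivative_at_0[where F = Ft and xk = xk and A = A and B = B and Pt = Pt]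
    unfolding lyapunov_along_feedback[OF lyap] c_def by (simp add: algebra_simps)
  from nonneg_near_0_if_pos_derivative[OF this] \<open>\<alpha> > 1\<close> \<open>c > 0\<close>
  show ?thesis
    by (simp add: feasible_P1_def Jcost_def)
qed

lemma P3_residual_has_real_derivative_at_0:
  fixes A Pt Q :: "real^'n^'n" and B :: "real^'m^'n" and F :: "real^'n^'m" and R :: "real^'m^'m"
    and xk :: "real^'n"
  assumes "transpose Pt = Pt"
  defines "u \<equiv> F *v xk" and "y \<equiv> A *v xk + B *v (F *v xk)"
  shows "((\<lambda>\<xi>. (1/2) * (vecm F \<bullet> (P1m A B Q R Pt \<alpha> xk \<xi> *v vecm F)) + q1v A B Q Pt \<alpha> xk \<xi> \<bullet> vecm F
      + r1v A Q Pt \<alpha> xk \<xi>)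
    has_real_derivative \<alpha> * (y \<bullet> (Pt *v xk) + xk \<bullet> (Pt *v y)) + (xk \<bullet> (Q *v xk) + u \<bullet> (R *v u)))
    (at 0 within {0..1})"
proof -
  have "((\<lambda>\<xi>. (1/2) * (vecm F \<bullet> (P1m A B Q R Pt \<alpha> xk \<xi> *v vecm F)) + q1v A B Q Pt \<alpha> xk \<xi> \<bullet> vecm F
      + r1v A Q Pt \<alpha> xk \<xi>) has_real_derivative
      (1/2) * (vecm F \<bullet> ((2 *\<^sub>R kron (outer xk) R) *v vecm F))
      + (2 *\<^sub>R vecm ((\<alpha> *\<^sub>R (transpose B ** Pt)) ** outer xk)) \<bullet> vecm F
      + xk \<bullet> ((Q + \<alpha> *\<^sub>R (transpose A ** Pt + Pt ** A)) *v xk)) (at 0 within {0..1})"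
    using bounded_linear.has_vector_derivative[OF bounded_linear_inner_left q1v_has_vector_derivative_at_0]
    by (intro DERIV_add DERIV_cmult has_real_derivative_inner_matrix_vector_mult
        P1m_has_vector_derivative_at_0 r1v_has_real_derivative_at_0)
      (simp add: has_real_derivative_iff_has_vector_derivative)
  moreover have "xk \<bullet> (Pt *v (B *v u)) = (B *v u) \<bullet> (Pt *v xk)"
    using assms(1) by (rule inner_symmetric_matrix)
  ultimately show ?thesis
    by (simp add: u_def y_def inner_vecm_kron_outer inner_vecm_mult_outer
        scaleR_matrix_vector_assoc[symmetric] matrix_vector_mult_add_rdistrib
        matrix_vector_mul_assoc[symmetric] inner_vector_matrix_mult inner_add_right
        inner_add_left matrix_vector_right_distrib algebra_simps)
qed

lemma feasible_P3_stabilizing_gain: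
  fixes A Pt Q :: "real^'n^'n" and B :: "real^'m^'n" and Ft :: "real^'n^'m" and R :: "real^'m^'m"
  assumes "pos_def Q" and "pos_def R" and "pos_def Pt"
    and lyap: "transpose (A + B ** Ft) ** Pt + Pt ** (A + B ** Ft) + Q + transpose Ft ** R ** Ft = 0"
    and "\<alpha> > 1"
  shows "\<exists>\<delta>>0. feasible_P3 A B Q R Pt \<alpha> xk (vecm Ft) \<delta>"
proof (cases "xk = 0")
  case True
  have "outer xk = 0" and "kron (0::real^'n^'n) (X::real^'m^'m) = 0" for X
    by (simp_all add: True outer_def kron_def vec_eq_iff)
  then have "feasible_P3 A B Q R Pt \<alpha> xk (vecm Ft) 1"
    by (simp add: True feasible_P3_def P1m_def q1v_def r1v_def)
  then show ?thesis using zero_less_one by blast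
next
  case False
  define c where "c = xk \<bullet> (Q *v xk) + (Ft *v xk) \<bullet> (R *v (Ft *v xk))"
  define \<rho> where "\<rho> \<xi> = (1/2) * (vecm Ft \<bullet> (P1m A B Q R Pt \<alpha> xk \<xi> *v vecm Ft))
    + q1v A B Q Pt \<alpha> xk \<xi> \<bullet> vecm Ft + r1v A Q Pt \<alpha> xk \<xi>" for \<xi>
  have "c > 0"
    unfolding c_def using assms(1,2) False by (rule stage_cost_pos)
  have "transpose Pt = Pt" using \<open>pos_def Pt\<close> by (simp add: pos_def_def)
  from P3_residual_has_real_derivative_at_0[OF this, where F = Ft and xk = xk and A = A and B = B]
  have "(\<rho> has_real_derivative (1 - \<alpha>) * c) (at 0 within {0..1})"
    unfolding lyapunov_along_feedback[OF lyap] \<rho>_def[abs_def] c_def by (simp add: algebra_simps)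
  then have "((\<lambda>\<xi>. - \<rho> \<xi>) has_real_derivative (\<alpha> - 1) * c) (at 0 within {0..1})"
    by (rule DERIV_minus[THEN DERIV_cong]) (simp add: algebra_simps)
  moreover have "(\<alpha> - 1) * c > 0" using \<open>\<alpha> > 1\<close> \<open>c > 0\<close> by simp
  moreover have "- \<rho> 0 = 0" by (simp add: \<rho>_def)
  ultimately obtain \<delta> where "\<delta> > 0" and "\<forall>\<xi>\<in>{0..\<delta>}. 0 \<le> - \<rho> \<xi>"
    using nonneg_near_0_if_pos_derivative by blast
  then have "feasible_P3 A B Q R Pt \<alpha> xk (vecm Ft) \<delta>"
    by (auto simp: feasible_P3_def \<rho>_def)
  with \<open>\<delta> > 0\<close> show ?thesis by blast
qed

theorem theorem5:
  fixes A :: "real^'n^'n" and B :: "real^'m^'n" and Q :: "real^'n^'n" and R :: "real^'m^'m"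
    and Ft :: "real^'n^'m" and Pt :: "real^'n^'n" and \<gamma> \<eta> \<alpha> :: real and xk :: "real^'n"
  assumes "stabilizable A B"
    and "pos_def Q" and "pos_def R"
    and "\<gamma> \<ge> 0" and "\<eta> \<ge> 0"
    and "hurwitz (A + B ** Ft)"
    and "pos_def Pt"
    and "transpose (A + B ** Ft) ** Pt + Pt ** (A + B ** Ft) + Q + transpose Ft ** R ** Ft = 0"
    and "\<alpha> > 1"
  shows "(\<exists>(F::real^'n^'m) \<delta>. \<delta> > 0 \<and> feasible_P1 A B Q R Pt \<alpha> xk F \<delta>)
       \<and> (\<exists>(f::real^('n \<times> 'm)) \<delta>. \<delta> > 0 \<and> feasible_P3 A B Q R Pt \<alpha> xk f \<delta>)"
  \<comment> \<open>Only the Lyapunov equation is used: stabilizability and the Hurwitz property merely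
    guarantee that \<open>Ft\<close> and \<open>Pt\<close> exist, and \<open>\<gamma>, \<eta>\<close> enter only the objectives.\<close>
  using feasible_P1_stabilizing_gain[OF assms(2,3,8,9)]
    feasible_P3_stabilizing_gain[OF assms(2,3,7,8,9)]
  by blast

end
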